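(* Let $n\ge 2$. (i) Every polynomial $f$ of degree $n$ which can be written as $f=gh$ with $g,h$ nonconstant integer-valued polynomials satisfies $P^+(f)\le n$. (ii) There exists a polynomial $f\in\mathbb{Z}[x]$ of degree $n$, reducible in $\mathbb{Q}[x]$, with $P^+(f)=n$. Consequently, the maximum of $P^+(f)$ over polynomials of degree $n$ that are products of two nonconstant integer-valued polynomials, and also over polynomials in $\mathbb{Z}[x]$ of degree $n$ that are reducible in $\mathbb{Q}[x]$, is exactly $n$.
   Context: A polynomial $f\in\mathbb{Q}[x]$ is integer-valued if $f(m)\in\mathbb{Z}$ for every $m\in\mathbb{Z}$. $P^+(f)=\#\{m\in\mathbb{Z}: f(m)>0\text{ and } f(m)\text{ is a prime number}\}$. *)

theory Defs
  imports "HOL-Computational_Algebra.Computational_Algebra"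
begin

definition int_valued :: "rat poly \<Rightarrow> bool" where
  "int_valued f \<longleftrightarrow> (\<forall>m::int. poly f (of_int m) \<in> \<int>)"

text \<open>The set of integers m with f(m) > 0 and f(m) a prime number; P^+(f) is its cardinality.\<close>
definition Pplus_set :: "rat poly \<Rightarrow> int set" where
  "Pplus_set f = {m::int. poly f (of_int m) > 0 \<and>
                   (\<exists>p::int. prime p \<and> poly f (of_int m) = of_int p)}"

definition iv_product :: "rat poly \<Rightarrow> bool" where
  "iv_product f \<longleftrightarrow> (\<exists>g h. int_valued g \<and> int_valued h \<and>
                        degree g > 0 \<and> degree h > 0 \<and> f = g * h)"

end

theory Submission
  imports Defs "Berlekamp_Zassenhaus.Factor_Bound" "HOL-Number_Theory.Pocklington"
begin

text \<open>
  If \<open>f = g h\<close> with \<open>g\<close>, \<open>h\<close> integer-valued and \<open>f(m)\<close> is a prime, then one of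
  \<open>g(m)\<close>, \<open>h(m)\<close> is \<open>\<plusminus>1\<close> while \<open>g(m) h(m) > 1\<close>. There are at most
  \<open>deg g + deg h\<close> real points of this kind. Call such a point outward if the factor that is not
  \<open>\<plusminus>1\<close> grows in absolute value just to its right. Between two such points with no critical
  point of \<open>g\<close> or \<open>h\<close> in between, the left one is not outward and the right one is; with
  a single critical point in between, an outward point cannot be followed by a non-outward one.
  Telescoping the potential "not outward" bounds the number of points by two plus the number of
  critical points, which is at most \<open>(deg g - 1) + (deg h - 1)\<close>.

  For the matching example choose \<open>n - 1\<close> primes \<open>p\<close>, a prime \<open>q \<equiv> 1\<close> modulo
  \<open>\<Prod>(p - 1)\<close> (it exists by the cyclotomic argument), and \<open>h = 1 + c \<Prod>(x - p)\<close> with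
  \<open>h(1) = q\<close>. Then \<open>f = x h\<close> takes the \<open>n\<close> prime values \<open>f(1) = q\<close> and \<open>f(p) = p\<close>.
\<close>

section \<open>Sign and monotonicity of real polynomials\<close>

lemma poly_constant_sign_on_connected:
  fixes q :: "real poly"
  assumes "connected I" "\<forall>t\<in>I. poly q t \<noteq> 0"
  shows "(\<forall>t\<in>I. 0 < poly q t) \<or> (\<forall>t\<in>I. poly q t < 0)"
proof (rule ccontr)
  assume "\<not> ?thesis"
  then obtain s t where st: "s \<in> I" "t \<in> I" "\<not> 0 < poly q s" "\<not> poly q t < 0"
    by blast
  have "poly q s \<noteq> 0" "poly q t \<noteq> 0"
    using st(1,2) assms(2) by blast+
  with st(3,4) have sign: "poly q s < 0" "0 < poly q t"
    by linarith+
  have "\<exists>r\<in>I. poly q r = 0"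
  proof (cases s t rule: linorder_cases)
    case less
    then obtain r where "s < r" "r < t" "poly q r = 0"
      using poly_IVT_pos sign by blast
    then show ?thesis
      using connectedD_interval[OF assms(1) st(1,2)] by (meson less_imp_le)
  next
    case greater
    then obtain r where "t < r" "r < s" "poly q r = 0"
      using poly_IVT_neg sign by blast
    then show ?thesis
      using connectedD_interval[OF assms(1) st(2,1)] by (meson less_imp_le)
  qed (use sign in simp)
  with assms(2) show False by blast
qed

text \<open>The direction of \<open>p\<close> just to the right of \<open>x\<close>; unlike the sign of \<open>poly (pderiv p) x\<close>,
  it is informative when \<open>x\<close> is a critical point.\<close>
definition rising_right :: "real poly \<Rightarrow> real \<Rightarrow> bool" where
  "rising_right p x \<longleftrightarrow> (\<forall>\<^sub>F t in at_right x. 0 < poly (pderiv p) t)"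

lemma rising_right_if_pderiv_pos:
  assumes "0 < poly (pderiv p) y"
  shows "rising_right p y"
proof -
  have "(poly (pderiv p) \<longlongrightarrow> poly (pderiv p) y) (at_right y)"
    by (intro tendsto_intros)
  then show ?thesis
    unfolding rising_right_def using assms by (rule order_tendstoD(1))
qed

lemma rising_right_imp_less:
  assumes "x < y" "\<forall>t\<in>{x<..<y}. poly (pderiv p) t \<noteq> 0" "rising_right p x"
  shows "poly p x < poly p y"
proof -
  have "\<not> (\<forall>t\<in>{x<..<y}. poly (pderiv p) t < 0)"
  proof
    assume "\<forall>t\<in>{x<..<y}. poly (pderiv p) t < 0"
    then have "\<forall>\<^sub>F t in at_right x. poly (pderiv p) t < 0"
      unfolding eventually_at_right[OF assms(1)] using assms(1) by auto
    with assms(3) have "\<forall>\<^sub>F t in at_right x. False"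
      unfolding rising_right_def by eventually_elim auto
    then show False by simp
  qed
  then have pos: "\<forall>t\<in>{x<..<y}. 0 < poly (pderiv p) t"
    using poly_constant_sign_on_connected[OF connected_Ioo assms(2)] by blast
  obtain r where r: "x < r" "r < y" "poly p y - poly p x = (y - x) * poly (pderiv p) r"
    using poly_MVT[OF assms(1)] by blast
  have "0 < (y - x) * poly (pderiv p) r"
    using pos r(1,2) assms(1) by simp
  with r(3) show ?thesis by simp
qed

lemma poly_less_iff_pderiv_at_end:
  fixes p :: "real poly"
  assumes "x < y" "\<forall>t\<in>{x<..y}. poly (pderiv p) t \<noteq> 0"
  shows "poly p x < poly p y \<longleftrightarrow> 0 < poly (pderiv p) y"
    and "poly p y < poly p x \<longleftrightarrow> poly (pderiv p) y < 0"
proof -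
  obtain r where r: "x < r" "r < y" "poly p y - poly p x = (y - x) * poly (pderiv p) r"
    using poly_MVT[OF assms(1)] by blast
  have mem: "r \<in> {x<..y}" "y \<in> {x<..y}"
    using r(1,2) assms(1) by auto
  have "poly p x < poly p y \<longleftrightarrow> 0 < (y - x) * poly (pderiv p) r"
    and "poly p y < poly p x \<longleftrightarrow> (y - x) * poly (pderiv p) r < 0"
    unfolding r(3)[symmetric] by simp_all
  then have mvt: "poly p x < poly p y \<longleftrightarrow> 0 < poly (pderiv p) r"
    "poly p y < poly p x \<longleftrightarrow> poly (pderiv p) r < 0"
    using assms(1) by (simp_all add: zero_less_mult_iff mult_less_0_iff)
  from poly_constant_sign_on_connected[OF connected_Ioc assms(2)]
  have same: "0 < poly (pderiv p) r \<longleftrightarrow> 0 < poly (pderiv p) y"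
    "poly (pderiv p) r < 0 \<longleftrightarrow> poly (pderiv p) y < 0"
    using mem by (meson less_asym)+
  show "poly p x < poly p y \<longleftrightarrow> 0 < poly (pderiv p) y"
    using mvt(1) same(1) by simp
  show "poly p y < poly p x \<longleftrightarrow> poly (pderiv p) y < 0"
    using mvt(2) same(2) by simp
qed

section \<open>Real points where one factor is a unit\<close>

definition unit_factor_points :: "real poly \<Rightarrow> real poly \<Rightarrow> real set" where
  "unit_factor_points g h =
     {x. 1 < poly g x * poly h x \<and> (\<bar>poly g x\<bar> = 1 \<or> \<bar>poly h x\<bar> = 1)}"

lemma unit_factor_points_cases:
  assumes "x \<in> unit_factor_points g h"
  obtains "poly g x = 1" "1 < poly h x" | "poly g x = -1" "poly h x < -1"
    | "poly h x = 1" "1 < poly g x" | "poly h x = -1" "poly g x < -1"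
  using assms unfolding unit_factor_points_def by (auto simp: abs_if split: if_splits)

lemma unit_factor_points_commute: "unit_factor_points h g = unit_factor_points g h"
  unfolding unit_factor_points_def by (auto simp: mult.commute)

lemma unit_factor_points_minus: "unit_factor_points (- g) (- h) = unit_factor_points g h"
  unfolding unit_factor_points_def by simp

lemma unit_factor_points_eq_1_if_gt_1:
  assumes "x \<in> unit_factor_points g h" "1 < poly h x"
  shows "poly g x = 1"
  using assms(1) by (cases rule: unit_factor_points_cases) (use assms(2) in auto)

lemma unit_factor_points_gt_1_if_eq_1:
  assumes "x \<in> unit_factor_points g h" "poly g x = 1"
  shows "1 < poly h x"
  using assms(1) by (cases rule: unit_factor_points_cases) (use assms(2) in auto)

definition crit_points :: "real poly \<Rightarrow> real \<Rightarrow> real \<Rightarrow> real set" where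
  "crit_points p x y = {t \<in> {x<..y}. poly (pderiv p) t = 0}"

lemma crit_points_eq_empty_iff:
  "crit_points p x y = {} \<longleftrightarrow> (\<forall>t\<in>{x<..y}. poly (pderiv p) t \<noteq> 0)"
  by (auto simp: crit_points_def)

lemma crit_points_minus: "crit_points (- p) x y = crit_points p x y"
  by (simp add: crit_points_def pderiv_minus)

lemma finite_crit_points: "pderiv p \<noteq> 0 \<Longrightarrow> finite (crit_points p x y)"
  unfolding crit_points_def by (rule finite_subset[OF _ poly_roots_finite]) auto

lemma crit_points_eq_singletonD:
  assumes "crit_points p x y = {z}"
  shows "x < z" "z \<le> y" "\<forall>t\<in>{x<..<z}. poly (pderiv p) t \<noteq> 0" "crit_points p z y = {}"
proof -
  have "z \<in> crit_points p x y"
    using assms by simp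
  then show "x < z" "z \<le> y"
    by (simp_all add: crit_points_def)
  show "\<forall>t\<in>{x<..<z}. poly (pderiv p) t \<noteq> 0"
  proof
    fix t assume t: "t \<in> {x<..<z}"
    show "poly (pderiv p) t \<noteq> 0"
    proof
      assume "poly (pderiv p) t = 0"
      with t \<open>z \<le> y\<close> have "t \<in> crit_points p x y"
        by (simp add: crit_points_def)
      with assms t show False
        by simp
    qed
  qed
  have "crit_points p z y \<subseteq> crit_points p x y"
    using \<open>x < z\<close> by (auto simp: crit_points_def)
  moreover have "z \<notin> crit_points p z y"
    by (simp add: crit_points_def)
  ultimately show "crit_points p z y = {}"
    unfolding assms by (metis insertI1 subset_singleton_iff)
qed

lemma card_crit_points_add:
  assumes "pderiv p \<noteq> 0" "x \<le> y" "y \<le> z"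
  shows "card (crit_points p x z) = card (crit_points p x y) + card (crit_points p y z)"
proof -
  have "crit_points p x z = crit_points p x y \<union> crit_points p y z"
    using assms(2,3) by (auto simp: crit_points_def)
  moreover have "crit_points p x y \<inter> crit_points p y z = {}"
    by (auto simp: crit_points_def)
  ultimately show ?thesis
    using finite_crit_points[OF assms(1)] by (simp add: card_Un_disjoint)
qed

lemma card_crit_points_le:
  assumes "0 < degree p"
  shows "card (crit_points p x y) \<le> degree p - 1"
proof -
  have p': "pderiv p \<noteq> 0"
    using assms by (simp add: pderiv_eq_0_iff)
  have "card (crit_points p x y) \<le> card {t. poly (pderiv p) t = 0}"
    by (rule card_mono[OF poly_roots_finite[OF p']]) (auto simp: crit_points_def)
  also have "\<dots> \<le> degree (pderiv p)"
    by (rule card_poly_roots_bound[OF p'])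
  finally show ?thesis
    by (simp add: degree_pderiv)
qed

definition crit_count :: "real poly \<Rightarrow> real poly \<Rightarrow> real \<Rightarrow> real \<Rightarrow> nat" where
  "crit_count g h x y = card (crit_points g x y) + card (crit_points h x y)"

lemma crit_count_commute: "crit_count h g x y = crit_count g h x y"
  by (simp add: crit_count_def)

lemma crit_count_minus: "crit_count (- g) (- h) x y = crit_count g h x y"
  by (simp add: crit_count_def crit_points_minus)

lemma crit_count_add:
  assumes "pderiv g \<noteq> 0" "pderiv h \<noteq> 0" "x \<le> y" "y \<le> z"
  shows "crit_count g h x z = crit_count g h x y + crit_count g h y z"
  using card_crit_points_add[OF assms(1,3,4)] card_crit_points_add[OF assms(2-4)]
  by (simp add: crit_count_def)

text \<open>Scaling the other factor by the unit value \<open>\<plusminus>1\<close> turns rising into moving away from zero.\<close>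
definition outward :: "real poly \<Rightarrow> real poly \<Rightarrow> real \<Rightarrow> bool" where
  "outward g h x \<longleftrightarrow>
     (if \<bar>poly g x\<bar> = 1 then rising_right (Polynomial.smult (poly g x) h) x
      else rising_right (Polynomial.smult (poly h x) g) x)"

lemma outward_minus: "outward (- g) (- h) x = outward g h x"
  by (simp add: outward_def)

lemma outward_commute:
  assumes "x \<in> unit_factor_points g h"
  shows "outward h g x = outward g h x"
  using assms by (cases rule: unit_factor_points_cases) (auto simp: outward_def)

lemma poly_ne_if_no_crit_points:
  assumes "x < y" "crit_points p x y = {}"
  shows "poly p y \<noteq> poly p x"
proof -
  have p'_ne: "\<forall>t\<in>{x<..y}. poly (pderiv p) t \<noteq> 0"
    using assms(2) by (simp add: crit_points_eq_empty_iff)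
  then have "poly (pderiv p) y \<noteq> 0"
    using assms(1) by simp
  then show ?thesis
    using poly_less_iff_pderiv_at_end[OF assms(1) p'_ne] by auto
qed

lemma outward_if_leaving_unit:
  assumes y: "y \<in> unit_factor_points g h" and "x < y" "poly g x = 1"
    and "crit_points g x y = {}" "poly (pderiv h) y < 0"
  shows "outward g h y"
proof -
  have g'_ne: "\<forall>t\<in>{x<..y}. poly (pderiv g) t \<noteq> 0"
    using assms(4) by (simp add: crit_points_eq_empty_iff)
  note g_mono = poly_less_iff_pderiv_at_end[OF \<open>x < y\<close> g'_ne, unfolded \<open>poly g x = 1\<close>]
  from y show ?thesis
  proof (cases rule: unit_factor_points_cases)
    case 1
    then show ?thesis
      using poly_ne_if_no_crit_points[OF \<open>x < y\<close> assms(4)] \<open>poly g x = 1\<close> by simp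
  next
    case 2
    then show ?thesis
      using assms(5) by (auto simp: outward_def pderiv_smult pderiv_minus intro!: rising_right_if_pderiv_pos)
  next
    case 3
    then show ?thesis
      using g_mono by (auto simp: outward_def pderiv_smult intro!: rising_right_if_pderiv_pos)
  next
    case 4
    then show ?thesis
      using g_mono by (auto simp: outward_def pderiv_smult pderiv_minus intro!: rising_right_if_pderiv_pos)
  qed
qed

lemma outward_step_no_crit:
  assumes x: "x \<in> unit_factor_points g h" and y: "y \<in> unit_factor_points g h"
    and "x < y" and gx: "poly g x = 1"
    and no_crit: "crit_points g x y = {}" "crit_points h x y = {}"
  shows "\<not> outward g h x \<and> outward g h y"
proof -
  have hx: "1 < poly h x"
    using unit_factor_points_gt_1_if_eq_1[OF x gx] .
  have "poly g y \<noteq> 1"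
    using poly_ne_if_no_crit_points[OF \<open>x < y\<close> no_crit(1)] gx by simp
  then have "\<not> poly h x < poly h y"
    using unit_factor_points_eq_1_if_gt_1[OF y] hx by force
  moreover have h'_ne: "\<forall>t\<in>{x<..y}. poly (pderiv h) t \<noteq> 0"
    using no_crit(2) by (simp add: crit_points_eq_empty_iff)
  moreover have "poly (pderiv h) y \<noteq> 0"
    using h'_ne \<open>x < y\<close> by simp
  ultimately have "poly (pderiv h) y < 0" "\<not> rising_right h x"
    using poly_less_iff_pderiv_at_end(1)[OF \<open>x < y\<close> h'_ne]
      rising_right_imp_less[OF \<open>x < y\<close>] by auto
  then show ?thesis
    using outward_if_leaving_unit[OF y \<open>x < y\<close> gx no_crit(1)] gx by (simp add: outward_def)
qed

lemma outward_step_crit_of_g: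
  assumes x: "x \<in> unit_factor_points g h" and y: "y \<in> unit_factor_points g h"
    and "x < y" and gx: "poly g x = 1"
    and "crit_points h x y = {}" "rising_right h x"
  shows "outward g h y"
proof -
  have hx: "1 < poly h x"
    using unit_factor_points_gt_1_if_eq_1[OF x gx] .
  have h'_ne: "\<forall>t\<in>{x<..y}. poly (pderiv h) t \<noteq> 0"
    using assms(5) by (simp add: crit_points_eq_empty_iff)
  have "poly h x < poly h y"
    using rising_right_imp_less[OF \<open>x < y\<close> _ assms(6)] h'_ne by auto
  then have "poly g y = 1" "0 < poly (pderiv h) y"
    using unit_factor_points_eq_1_if_gt_1[OF y] hx
      poly_less_iff_pderiv_at_end(1)[OF \<open>x < y\<close> h'_ne] by auto
  then show ?thesis
    by (simp add: outward_def rising_right_if_pderiv_pos)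
qed

lemma outward_step_crit_of_h:
  assumes x: "x \<in> unit_factor_points g h" and y: "y \<in> unit_factor_points g h"
    and "x < y" and gx: "poly g x = 1"
    and "crit_points g x y = {}" and "crit_points h x y = {z}" and "rising_right h x"
  shows "outward g h y"
proof -
  note z = crit_points_eq_singletonD[OF assms(6)]
  have hx: "1 < poly h x"
    using unit_factor_points_gt_1_if_eq_1[OF x gx] .
  have "poly g y \<noteq> 1"
    using poly_ne_if_no_crit_points[OF \<open>x < y\<close> assms(5)] gx by simp
  then have h_capped: "\<not> poly h w < poly h y" if "1 < poly h w" for w
    using unit_factor_points_eq_1_if_gt_1[OF y] that by force
  have hxz: "poly h x < poly h z"
    using rising_right_imp_less[OF z(1,3) assms(7)] .
  with hx have hz: "1 < poly h z"
    by simp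
  from hxz h_capped[OF hx] have "z \<noteq> y"
    by blast
  with z(2) have "z < y"
    by simp
  have h'_ne: "\<forall>t\<in>{z<..y}. poly (pderiv h) t \<noteq> 0"
    using z(4) by (simp add: crit_points_eq_empty_iff)
  then have "poly (pderiv h) y \<noteq> 0"
    using \<open>z < y\<close> by simp
  then have "poly (pderiv h) y < 0"
    using h_capped[OF hz] poly_less_iff_pderiv_at_end(1)[OF \<open>z < y\<close> h'_ne] by linarith
  then show ?thesis
    using outward_if_leaving_unit[OF y \<open>x < y\<close> gx assms(5)] by blast
qed

lemma outward_step_from_unit:
  assumes "pderiv g \<noteq> 0" "pderiv h \<noteq> 0"
    and x: "x \<in> unit_factor_points g h" and y: "y \<in> unit_factor_points g h"
    and "x < y" and gx: "poly g x = 1"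
  shows "of_bool (\<not> outward g h y) + 1 \<le> of_bool (\<not> outward g h x) + crit_count g h x y"
proof -
  have fin: "finite (crit_points g x y)" "finite (crit_points h x y)"
    using finite_crit_points assms(1,2) by blast+
  have out_x: "outward g h x \<longleftrightarrow> rising_right h x"
    using gx by (simp add: outward_def)
  consider "card (crit_points g x y) = 0" "card (crit_points h x y) = 0"
    | "card (crit_points g x y) = 1" "card (crit_points h x y) = 0"
    | "card (crit_points g x y) = 0" "card (crit_points h x y) = 1"
    | "2 \<le> crit_count g h x y"
    unfolding crit_count_def by linarith
  then show ?thesis
  proof cases
    case 1
    then have "crit_points g x y = {}" "crit_points h x y = {}"
      using fin by simp_all
    then have "\<not> outward g h x" "outward g h y"
      using outward_step_no_crit[OF x y \<open>x < y\<close> gx] by blast+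
    then show ?thesis
      by simp
  next
    case 2
    then have "crit_points h x y = {}"
      using fin by simp
    with 2 show ?thesis
      using outward_step_crit_of_g[OF x y \<open>x < y\<close> gx] out_x
      by (cases "rising_right h x") (simp_all add: crit_count_def)
  next
    case 3
    obtain z where "crit_points h x y = {z}"
      using card_1_singletonE[OF 3(2)] .
    moreover have "crit_points g x y = {}"
      using 3(1) fin by simp
    ultimately show ?thesis
      using outward_step_crit_of_h[OF x y \<open>x < y\<close> gx] out_x 3
      by (cases "rising_right h x") (simp_all add: crit_count_def)
  next
    case 4
    have "of_bool (\<not> outward g h y) + 1 \<le> (2::nat)"
      by simp
    also have "\<dots> \<le> of_bool (\<not> outward g h x) + crit_count g h x y"
      by (rule trans_le_add2[OF 4])
    finally show ?thesis .
  qed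
qed

lemma outward_step:
  assumes "pderiv g \<noteq> 0" "pderiv h \<noteq> 0"
    and x: "x \<in> unit_factor_points g h" and "y \<in> unit_factor_points g h" and "x < y"
  shows "of_bool (\<not> outward g h y) + 1 \<le> of_bool (\<not> outward g h x) + crit_count g h x y"
proof -
  have "pderiv (- g) \<noteq> 0" "pderiv (- h) \<noteq> 0"
    using assms(1,2) by (simp_all add: pderiv_minus)
  note minus = outward_step_from_unit[of "- g" "- h"] outward_step_from_unit[of "- h" "- g"]
  from x show ?thesis
  proof (cases rule: unit_factor_points_cases)
    case 1
    then show ?thesis
      using outward_step_from_unit[OF assms] by blast
  next
    case 2
    then show ?thesis
      using minus(1) assms \<open>pderiv (- g) \<noteq> 0\<close> \<open>pderiv (- h) \<noteq> 0\<close>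
      by (simp add: unit_factor_points_minus outward_minus crit_count_minus)
  next
    case 3
    then show ?thesis
      using outward_step_from_unit[of h g] assms
      by (simp add: unit_factor_points_commute outward_commute crit_count_commute)
  next
    case 4
    then show ?thesis
      using minus(2) assms \<open>pderiv (- g) \<noteq> 0\<close> \<open>pderiv (- h) \<noteq> 0\<close>
      by (simp add: unit_factor_points_minus unit_factor_points_commute outward_minus
          outward_commute crit_count_minus crit_count_commute)
  qed
qed

lemma card_le_telescoping:
  fixes S :: "'a::linorder set" and u :: "'a \<Rightarrow> nat"
  assumes "finite S" "S \<noteq> {}"
    and "\<And>x y. x \<in> S \<Longrightarrow> y \<in> S \<Longrightarrow> x < y \<Longrightarrow> u y + 1 \<le> u x + N x y"
    and add: "\<And>x y z. x \<le> y \<Longrightarrow> y \<le> z \<Longrightarrow> N x z = N x y + N y z"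
  shows "card S + u (Max S) \<le> 1 + u (Min S) + N (Min S) (Max S)"
  using assms(1,2,3)
proof (induction S rule: finite_linorder_max_induct)
  case empty
  then show ?case by simp
next
  case (insert b A)
  have N_refl: "N b b = 0"
    using add[of b b b] by simp
  show ?case
  proof (cases "A = {}")
    case True
    then show ?thesis using N_refl by simp
  next
    case False
    have IH: "card A + u (Max A) \<le> 1 + u (Min A) + N (Min A) (Max A)"
      using insert.IH[OF False] insert.prems(2) by blast
    have "Max A \<in> A" "Max A < b" "Min A \<le> Max A"
      using insert.hyps(1,2) False by simp_all
    have "Max (insert b A) = max b (Max A)"
      by (rule Max_insert[OF insert.hyps(1) False])
    also have "\<dots> = b"
      by (rule max_absorb1) (rule less_imp_le[OF \<open>Max A < b\<close>])
    finally have Max_b: "Max (insert b A) = b" .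
    have "Min (insert b A) = min b (Min A)"
      by (rule Min_insert[OF insert.hyps(1) False])
    also have "\<dots> = Min A"
      by (rule min_absorb2) (rule order.trans[OF \<open>Min A \<le> Max A\<close> less_imp_le[OF \<open>Max A < b\<close>]])
    finally have Min_b: "Min (insert b A) = Min A" .
    have "u b + 1 \<le> u (Max A) + N (Max A) b"
      by (rule insert.prems(2)) (use \<open>Max A \<in> A\<close> \<open>Max A < b\<close> in auto)
    moreover have "N (Min A) b = N (Min A) (Max A) + N (Max A) b"
      by (rule add[OF \<open>Min A \<le> Max A\<close> less_imp_le[OF \<open>Max A < b\<close>]])
    moreover have "card (insert b A) = Suc (card A)"
      by (rule card_insert_disjoint[OF insert.hyps(1)]) (use insert.hyps(2) in blast)
    ultimately show ?thesis
      unfolding Max_b Min_b using IH by linarith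
  qed
qed

theorem card_unit_factor_points_le:
  fixes g h :: "real poly"
  assumes "0 < degree g" "0 < degree h"
  shows "finite (unit_factor_points g h)"
    and "card (unit_factor_points g h) \<le> degree g + degree h"
proof -
  have level_finite: "finite {x. poly p x = c}" if "0 < degree p" for p :: "real poly" and c
  proof -
    have "p \<noteq> [:c:]"
      using that by auto
    then show ?thesis
      using poly_roots_finite[of "p - [:c:]"] by simp
  qed
  have "unit_factor_points g h \<subseteq>
      {x. poly g x = 1} \<union> {x. poly g x = -1} \<union> {x. poly h x = 1} \<union> {x. poly h x = -1}"
    by (auto simp: unit_factor_points_def abs_if split: if_splits)
  then show fin: "finite (unit_factor_points g h)"
    by (rule finite_subset) (simp add: level_finite assms)
  show "card (unit_factor_points g h) \<le> degree g + degree h"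
  proof (cases "unit_factor_points g h = {}")
    case False
    have g': "pderiv g \<noteq> 0" and h': "pderiv h \<noteq> 0"
      using assms by (simp_all add: pderiv_eq_0_iff)
    let ?S = "unit_factor_points g h"
    have "card ?S + of_bool (\<not> outward g h (Max ?S))
        \<le> 1 + of_bool (\<not> outward g h (Min ?S)) + crit_count g h (Min ?S) (Max ?S)"
      using fin False outward_step[OF g' h'] crit_count_add[OF g' h']
      by (rule card_le_telescoping)
    moreover have "crit_count g h (Min ?S) (Max ?S) \<le> (degree g - 1) + (degree h - 1)"
      unfolding crit_count_def using card_crit_points_le assms by (intro add_mono)
    moreover have "of_bool (\<not> outward g h (Min ?S)) \<le> (1::nat)"
      by simp
    ultimately show ?thesis
      using assms by linarith
  qed simp
qed

section \<open>Primes congruent to 1 modulo M\<close>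

lemma power_minus_1_dvd:
  assumes "d dvd M"
  shows "(y :: 'a :: comm_ring_1) ^ d - 1 dvd y ^ M - 1"
proof -
  obtain k where "M = d * k"
    using assms by (elim dvdE)
  then have "y ^ M - 1 = (y ^ d - 1) * (\<Sum>i<k. (y ^ d) ^ i)"
    by (simp add: power_mult power_diff_1_eq)
  then show ?thesis
    by simp
qed

lemma cis_power_ne_1:
  fixes d M :: nat
  assumes "0 < d" "d < M"
  shows "cis (2 * pi / M) ^ d \<noteq> 1"
proof
  assume "cis (2 * pi / M) ^ d = 1"
  then have "cos (real d * (2 * pi / M)) = 1"
    by (metis DeMoivre cis.sel(1) one_complex.sel(1))
  then obtain k :: int where k: "real d * (2 * pi / M) = real_of_int k * 2 * pi"
    by (auto simp: cos_one_2pi_int)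
  have "real_of_int k = real d / real M"
    using k assms by (simp add: field_simps)
  moreover have "0 < real d / real M" "real d / real M < 1"
    using assms by simp_all
  ultimately have "0 < k" "k < 1"
    by simp_all
  then show False
    by simp
qed

lemma exists_multiple_nonroot:
  fixes q :: "int poly"
  assumes "q \<noteq> 0" "0 < M"
  obtains t where "0 < t" "poly q (int (M * t)) \<noteq> 0"
proof -
  have "inj_on (\<lambda>t. int (M * t)) {0<..}"
    using assms(2) by (auto intro: inj_onI)
  then have "infinite ((\<lambda>t. int (M * t)) ` {0<..})"
    by (simp add: finite_image_iff infinite_Ioi)
  then have "\<not> (\<lambda>t. int (M * t)) ` {0<..} \<subseteq> {x. poly q x = 0}"
    using poly_roots_finite[OF assms(1)] finite_subset by blast
  then show ?thesis
    using that by auto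
qed

lemma cong_1_iff_int_dvd: "[b = 1] (mod p) \<longleftrightarrow> int p dvd int b - 1"
  by (metis cong_iff_dvd_diff cong_int_iff of_nat_1)

lemma dvd_pderiv_at_common_root:
  fixes B :: "int poly" and q x :: int
  assumes "[:0, 1:] ^ M - 1 = ([:0, 1:] ^ k - 1) * B" "q dvd x ^ k - 1" "q dvd poly B x"
  shows "q dvd int M * x ^ (M - 1)"
proof -
  have "poly (pderiv ([:0, 1:] ^ M - 1)) x
      = (x ^ k - 1) * poly (pderiv B) x + poly (pderiv ([:0, 1:] ^ k - 1)) x * poly B x"
    unfolding assms(1) pderiv_mult by (simp add: poly_power)
  also have "q dvd \<dots>"
    using assms(2,3) by (intro dvd_add dvd_mult2 dvd_mult)
  finally show ?thesis
    by (simp add: pderiv_diff pderiv_power pderiv_pCons poly_power)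
qed

lemma not_dvd_if_dvd_power_minus_1:
  fixes q a :: int
  assumes "q dvd a ^ M - 1" "0 < M" "\<not> is_unit q"
  shows "\<not> q dvd a"
proof
  assume "q dvd a"
  also have "a dvd a ^ M"
    using assms(2) by (simp add: dvd_power)
  finally have "q dvd a ^ M - (a ^ M - 1)"
    using assms(1) by (rule dvd_diff)
  with assms(3) show False
    by simp
qed

lemma ord_eq_if_prime_dvd_quotient:
  fixes L \<Psi> :: "int poly" and M a p :: nat
  assumes "0 < M" and factor: "[:0, 1:] ^ M - 1 = L * \<Psi>"
    and proper: "\<And>d. d dvd M \<Longrightarrow> d < M \<Longrightarrow> [:0, 1:] ^ d - 1 dvd L"
    and p: "prime p" and p_dvd: "int p dvd poly \<Psi> (int a)" and "M dvd a"
  shows "\<not> p dvd a" and "ord p a = M"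
proof -
  have "int a ^ M - 1 = poly L (int a) * poly \<Psi> (int a)"
    using arg_cong[OF factor, of "\<lambda>r. poly r (int a)"] by (simp add: poly_power)
  then have p_aM: "int p dvd int a ^ M - 1"
    using p_dvd by simp
  have "\<not> int p dvd int a"
    by (rule not_dvd_if_dvd_power_minus_1[OF p_aM \<open>0 < M\<close>]) (use prime_gt_1_nat[OF p] in simp)
  then show p_a: "\<not> p dvd a"
    by simp
  show "ord p a = M"
  proof (rule ccontr)
    txt \<open>Otherwise \<open>a\<close> is a double root of \<open>X^M - 1\<close> modulo \<open>p\<close>, so \<open>p\<close> divides the
      derivative \<open>M a^(M - 1)\<close>, yet \<open>p\<close> divides neither \<open>M\<close> nor \<open>a\<close>.\<close>
    assume "ord p a \<noteq> M"
    define k where "k = ord p a"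
    have "k dvd M"
      using p_aM cong_1_iff_int_dvd[of "a ^ M"] ord_divides by (simp add: k_def)
    with \<open>ord p a \<noteq> M\<close> \<open>0 < M\<close> have "k < M"
      using dvd_imp_le le_neq_implies_less by (auto simp: k_def)
    with \<open>k dvd M\<close> have "[:0, 1:] ^ k - 1 dvd L"
      by (rule proper)
    then obtain R where factor': "[:0, 1:] ^ M - 1 = ([:0, 1:] ^ k - 1) * (R * \<Psi>)"
      using factor by (auto simp: mult.assoc elim: dvdE)
    have "int p dvd int a ^ k - 1"
      using ord_divides[of a k p] cong_1_iff_int_dvd[of "a ^ k"] by (simp add: k_def)
    moreover have "int p dvd poly (R * \<Psi>) (int a)"
      using p_dvd by (simp add: dvd_mult)
    ultimately have "int p dvd int M * int a ^ (M - 1)"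
      by (rule dvd_pderiv_at_common_root[OF factor'])
    moreover have "\<not> int p dvd int M"
      using p_a \<open>M dvd a\<close> by (auto intro: dvd_trans)
    moreover have "\<not> int p dvd int a ^ (M - 1)"
      using p_a p by (auto dest: prime_dvd_power[rotated])
    ultimately show False
      using p by (simp add: prime_dvd_mult_iff)
  qed
qed

lemma cyclotomic_factor_exists:
  assumes "0 < M"
  obtains L \<Psi> :: "int poly" where "[:0, 1:] ^ M - 1 = L * \<Psi>"
    and "\<And>d. d dvd M \<Longrightarrow> d < M \<Longrightarrow> [:0, 1:] ^ d - 1 dvd L" and "0 < degree \<Psi>"
proof -
  define X :: "nat \<Rightarrow> int poly" where "X d = [:0, 1:] ^ d - 1" for d
  define D where "D = {d. d dvd M \<and> d < M}"
  have "finite D"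
    unfolding D_def by (rule finite_subset[of _ "{..<M}"]) auto
  define L where "L = Lcm (X ` D)"
  have proper: "X d dvd L" if "d dvd M" "d < M" for d
    unfolding L_def using that by (auto simp: D_def intro: dvd_Lcm)
  have "L dvd X M"
    unfolding L_def X_def by (rule Lcm_least) (auto simp: D_def power_minus_1_dvd)
  then obtain \<Psi> where factor: "X M = L * \<Psi>"
    by (elim dvdE)
  define \<zeta> where "\<zeta> = cis (2 * pi / M)"
  have poly_X: "poly (of_int_poly (X d)) \<zeta> = \<zeta> ^ d - 1" for d
    by (simp add: X_def hom_distribs poly_power)
  have "\<zeta> ^ d \<noteq> 1" if "d \<in> D" for d
    using that \<open>0 < M\<close> cis_power_ne_1[of d M] by (auto simp: D_def \<zeta>_def intro: Nat.gr0I)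
  then have "poly (of_int_poly (prod X D)) \<zeta> \<noteq> 0"
    using \<open>finite D\<close> by (simp add: of_int_poly_hom.hom_prod poly_prod poly_X)
  moreover have "L dvd prod X D"
    unfolding L_def by (rule Lcm_least) (auto intro: dvd_prodI[OF \<open>finite D\<close>])
  ultimately have "poly (of_int_poly L) \<zeta> \<noteq> 0"
    by (auto simp: of_int_poly_hom.hom_mult elim: dvdE)
  moreover have "poly (of_int_poly (X M)) \<zeta> = 0"
    using poly_X by (simp add: \<zeta>_def DeMoivre)
  ultimately have root: "poly (of_int_poly \<Psi>) \<zeta> = 0"
    by (simp add: factor of_int_poly_hom.hom_mult)
  have "poly (X M) 2 \<noteq> 0"
    using \<open>0 < M\<close> by (simp add: X_def poly_power)
  have "degree \<Psi> \<noteq> 0"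
  proof
    assume "degree \<Psi> = 0"
    then obtain c where "\<Psi> = [:c:]"
      by (rule degree_eq_zeroE)
    with root factor \<open>poly (X M) 2 \<noteq> 0\<close> show False
      by simp
  qed
  with factor proper show ?thesis
    using that unfolding X_def by blast
qed

lemma exists_prime_cong_1:
  fixes M :: nat
  assumes "0 < M"
  shows "\<exists>p. prime p \<and> [p = 1] (mod M)"
proof -
  obtain L \<Psi> :: "int poly" where factor: "[:0, 1:] ^ M - 1 = L * \<Psi>"
    and proper: "\<And>d. d dvd M \<Longrightarrow> d < M \<Longrightarrow> [:0, 1:] ^ d - 1 dvd L" and "0 < degree \<Psi>"
    using cyclotomic_factor_exists[OF assms] by blast
  then have "\<Psi> \<noteq> -1" "\<Psi> \<noteq> 0" "\<Psi> \<noteq> 1"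
    by auto
  then have "(\<Psi> + 1) * \<Psi> * (\<Psi> - 1) \<noteq> 0"
    by (simp add: eq_neg_iff_add_eq_0)
  then obtain t where "0 < t" and t: "poly ((\<Psi> + 1) * \<Psi> * (\<Psi> - 1)) (int (M * t)) \<noteq> 0"
    using exists_multiple_nonroot assms by blast
  define a where "a = M * t"
  have "poly \<Psi> (int a) \<noteq> -1" "poly \<Psi> (int a) \<noteq> 0" "poly \<Psi> (int a) \<noteq> 1"
    using t by (auto simp: a_def)
  then have "\<not> is_unit (poly \<Psi> (int a))" "poly \<Psi> (int a) \<noteq> 0"
    by (auto simp: zdvd1_eq abs_if)
  then obtain q where q: "prime q" "q dvd poly \<Psi> (int a)"
    using prime_divisor_exists by blast
  define p where "p = nat q"
  have "int p = q"
    using prime_ge_0_int[OF q(1)] by (simp add: p_def)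
  with q have "prime p" "int p dvd poly \<Psi> (int a)"
    by (metis prime_nat_int_transfer)+
  then have "\<not> p dvd a" "ord p a = M"
    using ord_eq_if_prime_dvd_quotient[OF assms factor proper] by (auto simp: a_def)
  moreover have "[a ^ (p - 1) = 1] (mod p)"
    by (rule fermat_theorem[OF \<open>prime p\<close> \<open>\<not> p dvd a\<close>])
  ultimately have "M dvd p - 1"
    by (metis ord_divides)
  then have "[p = 1] (mod M)"
    using prime_ge_1_nat[OF \<open>prime p\<close>] by (simp add: cong_altdef_nat)
  with \<open>prime p\<close> show ?thesis
    by blast
qed

section \<open>Prime values of products of integer-valued polynomials\<close>

lemma abs_eq_1_if_mult_eq_prime:
  fixes a b p :: int
  assumes "prime p" "a * b = p"
  shows "\<bar>a\<bar> = 1 \<or> \<bar>b\<bar> = 1"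
  using irreducibleD[OF prime_elem_imp_irreducible[OF prime_imp_prime_elem[OF assms(1)]]] assms(2)
  by (auto simp: zdvd1_eq)

lemma of_int_Pplus_set_subset_unit_factor_points:
  assumes "int_valued g" "int_valued h"
  shows "of_int ` Pplus_set (g * h) \<subseteq> unit_factor_points (map_poly of_rat g) (map_poly of_rat h)"
proof
  fix y :: real assume "y \<in> of_int ` Pplus_set (g * h)"
  then obtain m p where y: "y = of_int m" and p: "prime p" "poly (g * h) (of_int m) = of_int p"
    by (auto simp: Pplus_set_def)
  obtain a b where a: "poly g (of_int m) = of_int a" and b: "poly h (of_int m) = of_int b"
    using assms unfolding int_valued_def by (meson Ints_cases)
  have "a * b = p"
    using p(2) a b by (simp flip: of_int_mult)
  then have "\<bar>a\<bar> = 1 \<or> \<bar>b\<bar> = 1"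
    using abs_eq_1_if_mult_eq_prime p(1) by blast
  moreover have eval: "poly (map_poly of_rat q) (real_of_int m) = of_rat (poly q (of_int m))" for q
    by (metis of_rat_hom.poly_map_poly of_rat_of_int_eq)
  then have "poly (map_poly of_rat g) y = of_int a" "poly (map_poly of_rat h) y = of_int b"
    using a b by (simp_all add: y)
  moreover have "real_of_int a * real_of_int b = real_of_int p"
    using \<open>a * b = p\<close> by (simp flip: of_int_mult)
  moreover have "1 < p"
    using p(1) by (simp add: prime_gt_1_int)
  ultimately show "y \<in> unit_factor_points (map_poly of_rat g) (map_poly of_rat h)"
    by (simp add: unit_factor_points_def flip: of_int_abs)
qed

theorem card_Pplus_set_le:
  assumes "iv_product f"
  shows "finite (Pplus_set f)" and "card (Pplus_set f) \<le> degree f"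
proof -
  obtain g h where iv: "int_valued g" "int_valued h" and deg: "0 < degree g" "0 < degree h"
    and f: "f = g * h"
    using assms by (auto simp: iv_product_def)
  let ?S = "unit_factor_points (map_poly of_rat g) (map_poly of_rat h) :: real set"
  have "g \<noteq> 0" "h \<noteq> 0"
    using deg by auto
  then have S: "finite ?S" "card ?S \<le> degree f"
    using card_unit_factor_points_le[of "map_poly of_rat g" "map_poly of_rat h"] deg
    by (simp_all add: f degree_mult_eq)
  have sub: "of_int ` Pplus_set f \<subseteq> ?S"
    unfolding f by (rule of_int_Pplus_set_subset_unit_factor_points[OF iv])
  have inj: "inj_on (of_int :: int \<Rightarrow> real) (Pplus_set f)"
    by (rule inj_onI) simp
  have "finite (of_int ` Pplus_set f :: real set)"
    using sub S(1) by (rule finite_subset)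
  then show "finite (Pplus_set f)"
    using inj by (rule finite_imageD)
  have "card (Pplus_set f) = card (of_int ` Pplus_set f :: real set)"
    using inj by (rule card_image[symmetric])
  also have "\<dots> \<le> card ?S"
    using S(1) sub by (rule card_mono)
  also have "\<dots> \<le> degree f"
    by (rule S(2))
  finally show "card (Pplus_set f) \<le> degree f" .
qed

lemma int_valued_of_int_poly: "int_valued (of_int_poly f)"
  by (simp add: int_valued_def of_int_hom.poly_map_poly)

lemma not_irreducible_if_iv_product: "iv_product f \<Longrightarrow> \<not> irreducible f"
  by (auto simp: iv_product_def irreducible_def is_unit_poly_iff)

lemma iv_product_if_not_irreducible:
  fixes f :: "int poly"
  assumes "0 < degree f" "\<not> irreducible (of_int_poly f :: rat poly)"
  shows "iv_product (of_int_poly f)"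
proof -
  have "of_int_poly f \<noteq> (0 :: rat poly)" "\<not> is_unit (of_int_poly f :: rat poly)"
    using assms(1) by (auto simp: is_unit_poly_iff)
  then obtain a b :: "rat poly" where ab: "of_int_poly f = a * b" "\<not> is_unit a" "\<not> is_unit b"
    using assms(2) unfolding irreducible_def by blast
  then have "a \<noteq> 0" "b \<noteq> 0"
    using \<open>of_int_poly f \<noteq> 0\<close> by auto
  then have "0 < degree a" "0 < degree b"
    using ab(2,3) is_unit_iff_degree by blast+
  obtain g h where "f = g * h" "degree g = degree a" "degree h = degree b"
    using rat_to_int_factor[OF ab(1)] by blast
  then have "of_int_poly f = (of_int_poly g :: rat poly) * of_int_poly h"
    "0 < degree (of_int_poly g :: rat poly)" "0 < degree (of_int_poly h :: rat poly)"
    using \<open>0 < degree a\<close> \<open>0 < degree b\<close> by (simp_all add: of_int_poly_hom.hom_mult)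
  then show ?thesis
    unfolding iv_product_def using int_valued_of_int_poly by blast
qed

lemma card_Pplus_set_le_if_not_irreducible:
  fixes f :: "int poly"
  assumes "0 < degree f" "\<not> irreducible (of_int_poly f :: rat poly)"
  shows "card (Pplus_set (of_int_poly f)) \<le> degree f"
  using card_Pplus_set_le(2)[OF iv_product_if_not_irreducible[OF assms]] by simp

lemma mem_Pplus_set_of_int_poly:
  fixes f :: "int poly"
  assumes "prime (poly f m)"
  shows "m \<in> Pplus_set (of_int_poly f)"
  using assms prime_gt_0_int[OF assms]
  by (auto simp: Pplus_set_def of_int_hom.poly_map_poly)

lemma exists_int_poly_unit_at_primes:
  assumes "finite P" "P \<noteq> {}" "\<forall>p\<in>P. prime p"
  obtains h :: "int poly"
  where "degree h = card P" "\<forall>p\<in>P. poly h (int p) = 1" "prime (poly h 1)"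
proof -
  define Q :: "int poly" where "Q = (\<Prod>p\<in>P. [:- int p, 1:])"
  have "poly Q 1 = (\<Prod>p\<in>P. 1 - int p)"
    by (simp add: Q_def poly_prod)
  then have "poly Q 1 \<noteq> 0"
    using assms(1,3) by (auto simp: prod_zero_iff)
  then obtain q where q: "prime q" "[q = 1] (mod nat \<bar>poly Q 1\<bar>)"
    using exists_prime_cong_1[of "nat \<bar>poly Q 1\<bar>"] by auto
  then have "int (nat \<bar>poly Q 1\<bar>) dvd int q - 1"
    by (simp only: cong_1_iff_int_dvd)
  then have Q_dvd: "poly Q 1 dvd int q - 1"
    by simp
  define c where "c = (int q - 1) div poly Q 1"
  define h where "h = 1 + Polynomial.smult c Q"
  have h_1: "poly h 1 = int q"
    using Q_dvd by (simp add: h_def c_def)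
  have h_P: "poly h (int p) = 1" if "p \<in> P" for p
    using that assms(1) by (simp add: h_def Q_def poly_prod prod_zero_iff)
  have "c \<noteq> 0"
    using h_1 prime_gt_1_nat[OF q(1)] by (auto simp: h_def)
  have "degree Q = card P"
    using assms(1) by (simp add: Q_def degree_prod_sum_eq)
  moreover have "0 < card P"
    using assms(1,2) by (simp add: card_gt_0_iff)
  ultimately have "degree h = card P"
    using \<open>c \<noteq> 0\<close> unfolding h_def by (subst degree_add_eq_right) auto
  moreover have "prime (poly h 1)"
    using h_1 q(1) by simp
  ultimately show ?thesis
    using h_P that by simp
qed

lemma exists_int_poly_card_Pplus_set:
  assumes "2 \<le> n"
  obtains f :: "int poly"
  where "degree f = n" "iv_product (of_int_poly f)" "card (Pplus_set (of_int_poly f)) = n"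
proof -
  obtain P :: "nat set" where P: "finite P" "card P = n - 1" "P \<subseteq> {p. prime p}"
    using infinite_arbitrarily_large[OF primes_infinite] by blast
  then have "P \<noteq> {}" "\<forall>p\<in>P. prime p"
    using assms by auto
  then obtain h :: "int poly" where h: "degree h = card P"
    "\<forall>p\<in>P. poly h (int p) = 1" "prime (poly h 1)"
    by (rule exists_int_poly_unit_at_primes[OF P(1)])
  define f where "f = [:0, 1:] * h"
  have "h \<noteq> 0"
    using h(1) P(2) assms by auto
  then have deg_f: "degree f = n"
    using h(1) P(2) assms by (simp add: f_def degree_mult_eq)
  have "of_int_poly f = [:0, 1:] * (of_int_poly h :: rat poly)"
    "0 < degree (of_int_poly h :: rat poly)" "int_valued [:0, 1:]"
    using h(1) P(2) assms unfolding f_def of_int_poly_hom.hom_mult by (simp_all add: int_valued_def)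
  then have iv: "iv_product (of_int_poly f)"
    unfolding iv_product_def using int_valued_of_int_poly by fastforce
  have "prime (poly f 1)"
    using h(3) by (simp add: f_def)
  moreover have "prime (poly f (int p))" if "p \<in> P" for p
    using h(2) \<open>\<forall>p\<in>P. prime p\<close> that by (simp add: f_def)
  ultimately have "insert 1 (int ` P) \<subseteq> Pplus_set (of_int_poly f)"
    using mem_Pplus_set_of_int_poly by blast
  then have "card (insert 1 (int ` P)) \<le> card (Pplus_set (of_int_poly f))"
    by (rule card_mono[OF card_Pplus_set_le(1)[OF iv]])
  moreover have "1 \<notin> int ` P"
    using P(3) by auto
  then have "card (insert 1 (int ` P)) = n"
    using P(1,2) assms by (simp add: card_image)
  ultimately have "card (Pplus_set (of_int_poly f)) = n"
    using card_Pplus_set_le(2)[OF iv] deg_f by simp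
  with deg_f iv show ?thesis
    using that by blast
qed

lemma Max_eq_if_bound_attained:
  fixes A :: "nat set"
  assumes "\<And>a. a \<in> A \<Longrightarrow> a \<le> n" "n \<in> A"
  shows "Max A = n"
  using assms by (meson Max_eqI finite_nat_set_iff_bounded_le)

lemma Max_card_Pplus_set_iv_product:
  assumes "2 \<le> n"
  shows "Max {card (Pplus_set f) | f::rat poly. degree f = n \<and> iv_product f} = n"
proof (rule Max_eq_if_bound_attained)
  obtain f0 :: "int poly" where "degree f0 = n" "iv_product (of_int_poly f0)"
    "card (Pplus_set (of_int_poly f0)) = n"
    using exists_int_poly_card_Pplus_set[OF assms] .
  then show "n \<in> {card (Pplus_set f) | f::rat poly. degree f = n \<and> iv_product f}"
    by (intro CollectI exI[of _ "of_int_poly f0"]) simp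
qed (auto simp: card_Pplus_set_le(2))

lemma Max_card_Pplus_set_reducible:
  assumes "2 \<le> n"
  shows "Max {card (Pplus_set (of_int_poly f)) | f::int poly.
      degree f = n \<and> \<not> irreducible (of_int_poly f :: rat poly)} = n"
proof (rule Max_eq_if_bound_attained)
  obtain f0 :: "int poly" where "degree f0 = n" "iv_product (of_int_poly f0)"
    "card (Pplus_set (of_int_poly f0)) = n"
    using exists_int_poly_card_Pplus_set[OF assms] .
  then show "n \<in> {card (Pplus_set (of_int_poly f)) | f::int poly.
      degree f = n \<and> \<not> irreducible (of_int_poly f :: rat poly)}"
    using not_irreducible_if_iv_product by (intro CollectI exI[of _ f0]) simp
qed (use assms in \<open>auto intro!: card_Pplus_set_le_if_not_irreducible\<close>)

theorem theorem3:
  fixes n :: nat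
  assumes "n \<ge> 2"
  shows "(\<forall>f::rat poly. degree f = n \<and> iv_product f \<longrightarrow>
            finite (Pplus_set f) \<and> card (Pplus_set f) \<le> n)
       \<and> (\<exists>f::int poly. degree f = n \<and> \<not> irreducible (map_poly (of_int :: int \<Rightarrow> rat) f)
            \<and> finite (Pplus_set (map_poly of_int f))
            \<and> card (Pplus_set (map_poly of_int f)) = n)
       \<and> Max {card (Pplus_set f) | f::rat poly. degree f = n \<and> iv_product f} = n
       \<and> Max {card (Pplus_set (map_poly of_int f)) | f::int poly.
               degree f = n \<and> \<not> irreducible (map_poly (of_int :: int \<Rightarrow> rat) f)} = n"
proof -
  obtain f0 :: "int poly" where f0: "degree f0 = n" "iv_product (of_int_poly f0)"
    "card (Pplus_set (of_int_poly f0)) = n"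
    using exists_int_poly_card_Pplus_set[OF assms] .
  then have "\<exists>f::int poly. degree f = n \<and> \<not> irreducible (of_int_poly f :: rat poly)
      \<and> finite (Pplus_set (of_int_poly f)) \<and> card (Pplus_set (of_int_poly f)) = n"
    using not_irreducible_if_iv_product[OF f0(2)] card_Pplus_set_le(1)[OF f0(2)] by blast
  moreover have "\<forall>f::rat poly. degree f = n \<and> iv_product f \<longrightarrow>
      finite (Pplus_set f) \<and> card (Pplus_set f) \<le> n"
    using card_Pplus_set_le by auto
  ultimately show ?thesis
    using Max_card_Pplus_set_iv_product[OF assms] Max_card_Pplus_set_reducible[OF assms] by blast
qed

end
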